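(* For every nonnegative integer $n$ and complex parameters $\alpha,a$, \begin{align*} {}_3\phi_2\biggl({{q^{-n}, \alpha q^{n+1},q}\atop{q^2/a, 0}}; q, q\biggr) =q^{n^2+2n} \frac{(q, \alpha a; q)_n}{\bigl(q\alpha, q^2/a; q\bigr)_n} \Bigl(\frac{\alpha}{a}\Bigr)^n \sum_{j=0}^n \frac{\bigl(1-\alpha q^{2j}\bigr) (\alpha, q/a; q)_j (a/\alpha)^j q^{-j^2-j}}{(1-\alpha)(q, \alpha a; q)_j}. \end{align*}
   Context: Throughout, $q$ is a complex number with $0<|q|<1$. For $x\in\mathbb{C}$ and an integer $n\ge 0$, $(x;q)_n=\prod_{k=0}^{n-1}(1-xq^k)$, and $(x_1,\dots,x_m;q)_n=(x_1;q)_n\cdots(x_m;q)_n$. The basic hypergeometric series is ${}_r\phi_s\Bigl({{a_1,\dots,a_r}\atop{b_1,\dots,b_s}};q,z\Bigr)=\sum_{n=0}^\infty \frac{(a_1,\dots,a_r;q)_n}{(q,b_1,\dots,b_s;q)_n}\bigl((-1)^nq^{n(n-1)/2}\bigr)^{1+s-r}z^n$ (here a lower parameter $0$ means $(0;q)_n=1$). *)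

theory Defs
  imports "HOL-Analysis.Analysis"
begin

definition qpoch :: "complex \<Rightarrow> complex \<Rightarrow> nat \<Rightarrow> complex" where
  "qpoch x q n = (\<Prod>k<n. (1 - x * q ^ k))"

definition qpochs :: "complex list \<Rightarrow> complex \<Rightarrow> nat \<Rightarrow> complex" where
  "qpochs xs q n = (\<Prod>x\<leftarrow>xs. qpoch x q n)"

definition bhs :: "complex list \<Rightarrow> complex list \<Rightarrow> complex \<Rightarrow> complex \<Rightarrow> complex" where
  "bhs as bs q z = (\<Sum>n. qpochs as q n / (qpoch q q n * qpochs bs q n)
      * ((-1) ^ n * q ^ (n * (n - 1) div 2)) powi (1 + int (length bs) - int (length as))
      * z ^ n)"

end

theory Submission
  imports Defs
begin

(* Both sides S n satisfy the first-order inhomogeneous recurrence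
     (1 - \<alpha> q^(m+1)) (1 - q^(m+2)/a) S (m+1)
       = q^(2m+3) (\<alpha>/a) (1 - q^(m+1)) (1 - \<alpha> a q^m) S m + q^(m+1) (1 - \<alpha> q^(2m+2)) (1 - q/a)
   and both equal 1 at n = 0.  For the terminating 3phi2 this is creative telescoping: the
   combination of summands on the left is g (k+1) - g k for an explicit certificate g, and the
   boundary values of g give the inhomogeneous term.  On the right the prefactor satisfies the
   homogeneous recurrence, and the newly added last summand supplies the inhomogeneous term. *)

lemma qpoch_0 [simp]: "qpoch x q 0 = 1"
  by (simp add: qpoch_def)

lemma qpoch_0_left [simp]: "qpoch 0 q k = 1"
  by (simp add: qpoch_def)

lemma qpoch_Suc: "qpoch x q (Suc k) = qpoch x q k * (1 - x * q ^ k)"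
  by (simp add: qpoch_def)

lemma qpoch_Suc_shift: "qpoch x q (Suc k) = (1 - x) * qpoch (x * q) q k"
  by (induction k) (simp_all add: qpoch_Suc mult_ac)

lemma qpoch_shift: "(1 - x) * qpoch (x * q) q k = qpoch x q k * (1 - x * q ^ k)"
  by (simp add: qpoch_Suc_shift[symmetric] qpoch_Suc)

lemma qpoch_eq_0_iff: "qpoch x q k = 0 \<longleftrightarrow> (\<exists>i<k. x * q ^ i = 1)"
  by (auto simp: qpoch_def prod_zero_iff)

lemma qpoch_nonzero_le: "qpoch x q n \<noteq> 0 \<Longrightarrow> k \<le> n \<Longrightarrow> qpoch x q k \<noteq> 0"
  by (auto simp: qpoch_eq_0_iff)

lemma qpoch_inverse_power_eq_0: "q \<noteq> 0 \<Longrightarrow> n < k \<Longrightarrow> qpoch (inverse (q ^ n)) q k = 0"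
  by (auto simp: qpoch_eq_0_iff)

lemma qpoch_nonzero_norm_less_1:
  assumes "norm x < 1" "norm q \<le> 1"
  shows "qpoch x q k \<noteq> 0"
proof -
  have "x * q ^ i \<noteq> 1" for i
  proof -
    have "norm (x * q ^ i) < 1"
      using assms by (simp add: norm_mult norm_power mult_le_one power_le_one
        le_less_trans[OF mult_right_le_one_le])
    then show ?thesis by auto
  qed
  then show ?thesis
    by (auto simp: qpoch_eq_0_iff)
qed

lemma bhs_3phi2_terminating:
  fixes q b c z :: complex
  assumes "q \<noteq> 0" "norm q < 1"
  shows "bhs [inverse (q ^ n), b, q] [c, 0] q z
    = (\<Sum>k\<le>n. qpoch (inverse (q ^ n)) q k * qpoch b q k / qpoch c q k * z ^ k)"
proof -
  have summand: "qpochs [inverse (q ^ n), b, q] q k / (qpoch q q k * qpochs [c, 0] q k)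
      * ((-1) ^ k * q ^ (k * (k - 1) div 2)) powi (1 + int (length [c, 0]) - int (length [inverse (q ^ n), b, q]))
      * z ^ k = qpoch (inverse (q ^ n)) q k * qpoch b q k / qpoch c q k * z ^ k" for k
    using qpoch_nonzero_norm_less_1[of q q k] assms(2) by (simp add: qpochs_def)
  show ?thesis
    unfolding bhs_def summand
    by (rule suminf_finite) (auto simp: assms(1) qpoch_inverse_power_eq_0)
qed

lemma first_order_recurrence_unique:
  fixes X Y D E c :: "nat \<Rightarrow> 'a::field"
  assumes "X 0 = Y 0"
    and "\<And>m. m < n \<Longrightarrow> D m \<noteq> 0"
    and "\<And>m. m < n \<Longrightarrow> D m * X (Suc m) = E m * X m + c m"
    and "\<And>m. m < n \<Longrightarrow> D m * Y (Suc m) = E m * Y m + c m"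
  shows "X n = Y n"
  using assms by (induction n) (auto, metis less_Suc_eq mult_left_cancel)

definition rec_lead :: "complex \<Rightarrow> complex \<Rightarrow> complex \<Rightarrow> nat \<Rightarrow> complex" where
  "rec_lead q \<alpha> a m = (1 - \<alpha> * q ^ (m + 1)) * (1 - q ^ (m + 2) / a)"

definition rec_trail :: "complex \<Rightarrow> complex \<Rightarrow> complex \<Rightarrow> nat \<Rightarrow> complex" where
  "rec_trail q \<alpha> a m = q ^ (2 * m + 3) * (\<alpha> / a) * (1 - q ^ (m + 1)) * (1 - \<alpha> * a * q ^ m)"

definition rec_inhom :: "complex \<Rightarrow> complex \<Rightarrow> complex \<Rightarrow> nat \<Rightarrow> complex" where
  "rec_inhom q \<alpha> a m = q ^ (m + 1) * (1 - \<alpha> * q ^ (2 * m + 2)) * (1 - q / a)"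

lemma rec_lead_nonzero:
  assumes "qpoch (q * \<alpha>) q (Suc m) \<noteq> 0" "qpoch (q\<^sup>2 / a) q (Suc m) \<noteq> 0"
  shows "rec_lead q \<alpha> a m \<noteq> 0"
  using assms by (simp add: rec_lead_def qpoch_Suc power2_eq_square mult_ac)

definition phi_term :: "complex \<Rightarrow> complex \<Rightarrow> complex \<Rightarrow> nat \<Rightarrow> nat \<Rightarrow> complex" where
  "phi_term q \<alpha> a n k =
     qpoch (inverse (q ^ n)) q k * qpoch (\<alpha> * q ^ (n + 1)) q k / qpoch (q\<^sup>2 / a) q k * q ^ k"

definition wz_cert :: "complex \<Rightarrow> complex \<Rightarrow> complex \<Rightarrow> nat \<Rightarrow> nat \<Rightarrow> complex" where
  "wz_cert q \<alpha> a n k = - (q ^ n) * (1 - \<alpha> * q ^ (2 * n))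
     * qpoch (inverse (q ^ n)) q k * qpoch (\<alpha> * q ^ n) q k * (1 - q ^ (k + 1) / a) / qpoch (q\<^sup>2 / a) q k"

(* At k = n the factor 1 - q^(k+2)/a may vanish, but then (q^-n;q)_(k+1) = 0 on both sides. *)
lemma wz_cert_Suc:
  fixes q \<alpha> a :: complex
  assumes "q \<noteq> 0" "qpoch (q\<^sup>2 / a) q n \<noteq> 0" "k \<le> n"
  shows "wz_cert q \<alpha> a n (Suc k) = - (q ^ n) * (1 - \<alpha> * q ^ (2 * n))
     * qpoch (inverse (q ^ n)) q (Suc k) * qpoch (\<alpha> * q ^ n) q (Suc k) / qpoch (q\<^sup>2 / a) q k"
proof (cases "k < n")
  case True
  define d where "d = 1 - q\<^sup>2 / a * q ^ k"
  have "1 - q ^ (Suc k + 1) / a = d"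
    by (simp add: d_def power2_eq_square)
  moreover have "d \<noteq> 0"
    using qpoch_nonzero_le[OF assms(2), of "Suc k"] True by (simp add: d_def qpoch_Suc)
  ultimately show ?thesis
    unfolding wz_cert_def qpoch_Suc[of "q\<^sup>2 / a"] d_def[symmetric]
    by (simp add: nonzero_mult_divide_mult_cancel_right mult.assoc[symmetric])
next
  case False
  then show ?thesis
    using assms by (simp add: wz_cert_def qpoch_inverse_power_eq_0)
qed

lemma phi_term_wz_pair:
  fixes q \<alpha> a :: complex
  assumes q: "q \<noteq> 0" and a: "a \<noteq> 0" and C: "qpoch (q\<^sup>2 / a) q (Suc m) \<noteq> 0"
    and k: "k \<le> Suc m"
  shows "rec_lead q \<alpha> a m * phi_term q \<alpha> a (Suc m) k - rec_trail q \<alpha> a m * phi_term q \<alpha> a m k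
       = wz_cert q \<alpha> a (Suc m) (Suc k) - wz_cert q \<alpha> a (Suc m) k"
proof -
  define w where "w = q ^ m"
  define x where "x = q * w"
  define y where "y = q ^ k"
  define u where "u = qpoch (inverse x) q k"
  define v where "v = qpoch (\<alpha> * x) q k"
  define c where "c = qpoch (q\<^sup>2 / a) q k"
  have x: "x \<noteq> 0" "q ^ Suc m = x" "q ^ (m + 1) = x" "q ^ (m + 2) = q * x"
    "q ^ (2 * Suc m) = x\<^sup>2"
    using q by (simp_all add: x_def w_def power_mult power2_eq_square power_mult_distrib)
  have c: "c \<noteq> 0"
    unfolding c_def using qpoch_nonzero_le[OF C k] .
  have shift_alpha: "(1 - \<alpha> * x) * qpoch (\<alpha> * q ^ (Suc m + 1)) q k = v * (1 - \<alpha> * x * y)"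
    using qpoch_Suc_shift[of "\<alpha> * x" q k] x(2)
    by (simp add: qpoch_Suc v_def y_def mult_ac)
  have shift_inverse: "(1 - inverse x) * qpoch (inverse w) q k = u * (1 - inverse x * y)"
  proof -
    have "inverse w = inverse x * q"
      using q by (simp add: x_def)
    then show ?thesis
      using qpoch_Suc_shift[of "inverse x" q k] by (simp add: qpoch_Suc u_def y_def)
  qed
  have lead: "rec_lead q \<alpha> a m * phi_term q \<alpha> a (Suc m) k
      = (1 - q * x / a) * u * (v * (1 - \<alpha> * x * y)) * y / c"
    unfolding rec_lead_def phi_term_def shift_alpha[symmetric] x(2-4)
    by (simp add: u_def c_def y_def mult_ac)
  have trail: "rec_trail q \<alpha> a m * phi_term q \<alpha> a m k
      = - q * x ^ 3 * (\<alpha> / a) * (1 - \<alpha> * a * w) * (u * (1 - inverse x * y)) * v * y / c"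
  proof -
    have "q ^ (2 * m + 3) = q * x\<^sup>2" "1 - x = - x * (1 - inverse x)"
      using x(1) by (simp_all add: x_def w_def power_add power_mult_distrib power_mult
          algebra_simps power2_eq_square power3_eq_cube)
    then show ?thesis
      unfolding rec_trail_def phi_term_def shift_inverse[symmetric] x(3) w_def[symmetric]
      by (simp add: v_def c_def y_def power2_eq_square power3_eq_cube mult_ac)
  qed
  have cert: "wz_cert q \<alpha> a (Suc m) k = - x * (1 - \<alpha> * x\<^sup>2) * u * v * (1 - q * y / a) / c"
    unfolding wz_cert_def x(2,5) by (simp add: u_def v_def c_def y_def)
  have cert_Suc: "wz_cert q \<alpha> a (Suc m) (Suc k)
      = - x * (1 - \<alpha> * x\<^sup>2) * (u * (1 - inverse x * y)) * (v * (1 - \<alpha> * x * y)) / c"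
    unfolding wz_cert_Suc[OF q C k] x(2,5) by (simp add: u_def v_def c_def y_def qpoch_Suc)
  show ?thesis
    unfolding lead trail cert cert_Suc using a c x(1)
    by (simp add: field_simps x_def) algebra
qed

definition phi_sum :: "complex \<Rightarrow> complex \<Rightarrow> complex \<Rightarrow> nat \<Rightarrow> complex" where
  "phi_sum q \<alpha> a n = (\<Sum>k\<le>n. phi_term q \<alpha> a n k)"

lemma phi_sum_recurrence:
  fixes q \<alpha> a :: complex
  assumes q: "q \<noteq> 0" and a: "a \<noteq> 0" and C: "qpoch (q\<^sup>2 / a) q (Suc m) \<noteq> 0"
  shows "rec_lead q \<alpha> a m * phi_sum q \<alpha> a (Suc m)
    = rec_trail q \<alpha> a m * phi_sum q \<alpha> a m + rec_inhom q \<alpha> a m"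
proof -
  have "phi_term q \<alpha> a m (Suc m) = 0"
    using q by (simp add: phi_term_def qpoch_inverse_power_eq_0)
  then have sum_m: "phi_sum q \<alpha> a m = (\<Sum>k<Suc (Suc m). phi_term q \<alpha> a m k)"
    by (simp add: phi_sum_def lessThan_Suc_atMost)
  have "rec_lead q \<alpha> a m * phi_sum q \<alpha> a (Suc m) - rec_trail q \<alpha> a m * phi_sum q \<alpha> a m
      = (\<Sum>k<Suc (Suc m). wz_cert q \<alpha> a (Suc m) (Suc k) - wz_cert q \<alpha> a (Suc m) k)"
    unfolding sum_m
    unfolding phi_sum_def lessThan_Suc_atMost[symmetric] sum_distrib_left sum_subtractf[symmetric]
    by (rule sum.cong) (simp_all add: phi_term_wz_pair[OF q a C])
  also have "\<dots> = wz_cert q \<alpha> a (Suc m) (Suc (Suc m)) - wz_cert q \<alpha> a (Suc m) 0"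
    by (rule sum_lessThan_telescope)
  also have "\<dots> = rec_inhom q \<alpha> a m"
    using qpoch_inverse_power_eq_0[OF q, of "Suc m" "Suc (Suc m)"]
    by (simp add: wz_cert_def rec_inhom_def power_mult)
  finally show ?thesis
    by (simp add: algebra_simps)
qed

definition rhs_factor :: "complex \<Rightarrow> complex \<Rightarrow> complex \<Rightarrow> nat \<Rightarrow> complex" where
  "rhs_factor q \<alpha> a n =
     q ^ (n\<^sup>2 + 2 * n) * (qpochs [q, \<alpha> * a] q n / qpochs [q * \<alpha>, q\<^sup>2 / a] q n) * (\<alpha> / a) ^ n"

definition rhs_term :: "complex \<Rightarrow> complex \<Rightarrow> complex \<Rightarrow> nat \<Rightarrow> complex" where
  "rhs_term q \<alpha> a j = (1 - \<alpha> * q ^ (2 * j)) * qpochs [\<alpha>, q / a] q j * (a / \<alpha>) ^ j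
     * inverse (q ^ (j\<^sup>2 + j)) / ((1 - \<alpha>) * qpochs [q, \<alpha> * a] q j)"

definition rhs_sum :: "complex \<Rightarrow> complex \<Rightarrow> complex \<Rightarrow> nat \<Rightarrow> complex" where
  "rhs_sum q \<alpha> a n = rhs_factor q \<alpha> a n * (\<Sum>j = 0..n. rhs_term q \<alpha> a j)"

lemma rhs_factor_Suc:
  "rhs_factor q \<alpha> a (Suc m) = rhs_factor q \<alpha> a m * (q ^ (2 * m + 3) * (\<alpha> / a)
     * ((1 - q * q ^ m) * (1 - \<alpha> * a * q ^ m)) / ((1 - q * \<alpha> * q ^ m) * (1 - q\<^sup>2 / a * q ^ m)))"
proof -
  have "(Suc m)\<^sup>2 + 2 * Suc m = (m\<^sup>2 + 2 * m) + (2 * m + 3)"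
    by (simp add: power2_eq_square)
  then have "q ^ ((Suc m)\<^sup>2 + 2 * Suc m) = q ^ (m\<^sup>2 + 2 * m) * q ^ (2 * m + 3)"
    by (simp only: power_add)
  then show ?thesis
    unfolding rhs_factor_def qpochs_def qpoch_Suc power_Suc2[of "\<alpha> / a"]
    by (simp only: list.map prod_list.Cons prod_list.Nil mult_1_right divide_inverse
        inverse_mult_distrib inverse_1 mult_1_left mult_ac)
qed

lemma rhs_factor_recurrence:
  fixes q \<alpha> a :: complex
  assumes a: "a \<noteq> 0" and B: "qpoch (q * \<alpha>) q (Suc m) \<noteq> 0" and C: "qpoch (q\<^sup>2 / a) q (Suc m) \<noteq> 0"
  shows "rec_lead q \<alpha> a m * rhs_factor q \<alpha> a (Suc m) = rec_trail q \<alpha> a m * rhs_factor q \<alpha> a m"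
proof -
  define D where "D = (1 - q * \<alpha> * q ^ m) * (1 - q\<^sup>2 / a * q ^ m)"
  have lead: "rec_lead q \<alpha> a m = D"
    by (simp add: rec_lead_def D_def power2_eq_square mult_ac)
  have "D \<noteq> 0"
    using B C by (simp add: D_def qpoch_Suc)
  then show ?thesis
    unfolding rhs_factor_Suc lead D_def[symmetric] rec_trail_def by (simp add: mult_ac)
qed

lemma rhs_factor_mult_rhs_term:
  fixes q \<alpha> a :: complex
  assumes q: "q \<noteq> 0" "norm q < 1" and a: "a \<noteq> 0" and \<alpha>: "\<alpha> \<noteq> 0"
    and A: "qpoch (\<alpha> * a) q n \<noteq> 0"
  shows "rhs_factor q \<alpha> a n * rhs_term q \<alpha> a n = q ^ n * (1 - \<alpha> * q ^ (2 * n))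
    * qpoch \<alpha> q n * qpoch (q / a) q n / ((1 - \<alpha>) * qpoch (q * \<alpha>) q n * qpoch (q\<^sup>2 / a) q n)"
proof -
  have "n\<^sup>2 + 2 * n = (n\<^sup>2 + n) + n"
    by simp
  then have "q ^ (n\<^sup>2 + 2 * n) * inverse (q ^ (n\<^sup>2 + n)) = q ^ n"
    using q(1) by (simp only: power_add) (simp add: field_simps)
  moreover have "(\<alpha> / a) ^ n * (a / \<alpha>) ^ n = 1"
    using a \<alpha> by (simp add: power_mult_distrib[symmetric])
  moreover have "qpoch q q n * qpoch (\<alpha> * a) q n / (qpoch q q n * qpoch (\<alpha> * a) q n) = 1"
    using A qpoch_nonzero_norm_less_1[of q q n] q(2) by simp
  moreover have "rhs_factor q \<alpha> a n * rhs_term q \<alpha> a n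
      = (q ^ (n\<^sup>2 + 2 * n) * inverse (q ^ (n\<^sup>2 + n))) * ((\<alpha> / a) ^ n * (a / \<alpha>) ^ n)
        * (qpoch q q n * qpoch (\<alpha> * a) q n / (qpoch q q n * qpoch (\<alpha> * a) q n))
        * ((1 - \<alpha> * q ^ (2 * n)) * qpoch \<alpha> q n * qpoch (q / a) q n
           / ((1 - \<alpha>) * qpoch (q * \<alpha>) q n * qpoch (q\<^sup>2 / a) q n))"
    unfolding rhs_factor_def rhs_term_def qpochs_def
    by (simp only: list.map prod_list.Cons prod_list.Nil mult_1_right divide_inverse
        inverse_mult_distrib inverse_1 mult_1_left mult_ac)
  ultimately show ?thesis
    by (simp add: mult.assoc)
qed

lemma rec_lead_mult_rhs_last_term:
  fixes q \<alpha> a :: complex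
  assumes q: "q \<noteq> 0" "norm q < 1" and a: "a \<noteq> 0" and \<alpha>: "\<alpha> \<noteq> 0" "\<alpha> \<noteq> 1"
    and A: "qpoch (\<alpha> * a) q (Suc m) \<noteq> 0" and B: "qpoch (q * \<alpha>) q (Suc m) \<noteq> 0"
    and C: "qpoch (q\<^sup>2 / a) q (Suc m) \<noteq> 0"
  shows "rec_lead q \<alpha> a m * (rhs_factor q \<alpha> a (Suc m) * rhs_term q \<alpha> a (Suc m)) = rec_inhom q \<alpha> a m"
proof -
  define N where "N = Suc m"
  define X where "X = q ^ N * (1 - \<alpha> * q ^ (2 * N))"
  have shift_\<alpha>: "qpoch \<alpha> q N * (1 - \<alpha> * q ^ N) = (1 - \<alpha>) * qpoch (q * \<alpha>) q N"
    using qpoch_shift[of \<alpha> q N] by (simp add: mult.commute)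
  have shift_a: "qpoch (q / a) q N * (1 - q / a * q ^ N) = (1 - q / a) * qpoch (q\<^sup>2 / a) q N"
    using qpoch_shift[of "q / a" q N] by (simp add: power2_eq_square)
  have lead: "rec_lead q \<alpha> a m = (1 - \<alpha> * q ^ N) * (1 - q / a * q ^ N)"
    by (simp add: rec_lead_def N_def)
  have inhom: "rec_inhom q \<alpha> a m = X * (1 - q / a)"
    by (simp add: rec_inhom_def X_def N_def)
  have "rec_lead q \<alpha> a m * (rhs_factor q \<alpha> a N * rhs_term q \<alpha> a N)
      = X * (qpoch \<alpha> q N * (1 - \<alpha> * q ^ N)) * (qpoch (q / a) q N * (1 - q / a * q ^ N))
        / ((1 - \<alpha>) * qpoch (q * \<alpha>) q N * qpoch (q\<^sup>2 / a) q N)"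
    unfolding lead rhs_factor_mult_rhs_term[OF q a \<alpha>(1) A[folded N_def]] X_def
    by (simp add: mult_ac)
  also have "\<dots> = X * (1 - q / a)"
    unfolding shift_\<alpha> shift_a using \<alpha>(2) B C by (simp add: N_def field_simps)
  finally show ?thesis
    unfolding inhom N_def .
qed

lemma rhs_sum_recurrence:
  fixes q \<alpha> a :: complex
  assumes q: "q \<noteq> 0" "norm q < 1" and a: "a \<noteq> 0" and \<alpha>: "\<alpha> \<noteq> 0" "\<alpha> \<noteq> 1"
    and A: "qpoch (\<alpha> * a) q (Suc m) \<noteq> 0" and B: "qpoch (q * \<alpha>) q (Suc m) \<noteq> 0"
    and C: "qpoch (q\<^sup>2 / a) q (Suc m) \<noteq> 0"
  shows "rec_lead q \<alpha> a m * rhs_sum q \<alpha> a (Suc m)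
    = rec_trail q \<alpha> a m * rhs_sum q \<alpha> a m + rec_inhom q \<alpha> a m"
proof -
  have "rec_lead q \<alpha> a m * rhs_sum q \<alpha> a (Suc m)
      = rec_lead q \<alpha> a m * rhs_factor q \<alpha> a (Suc m) * (\<Sum>j = 0..m. rhs_term q \<alpha> a j)
        + rec_lead q \<alpha> a m * (rhs_factor q \<alpha> a (Suc m) * rhs_term q \<alpha> a (Suc m))"
    by (simp add: rhs_sum_def algebra_simps)
  then show ?thesis
    unfolding rhs_factor_recurrence[OF a B C] rec_lead_mult_rhs_last_term[OF assms]
    by (simp add: rhs_sum_def mult.assoc)
qed

theorem theorem2p6:
  fixes q \<alpha> a :: complex and n :: nat
  assumes "0 < norm q" "norm q < 1"
    and "a \<noteq> 0" "\<alpha> \<noteq> 0" "\<alpha> \<noteq> 1"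
    and "qpoch (q\<^sup>2 / a) q n \<noteq> 0"
    and "qpoch (q * \<alpha>) q n \<noteq> 0"
    and "qpoch (\<alpha> * a) q n \<noteq> 0"
  shows "bhs [inverse (q ^ n), \<alpha> * q ^ (n + 1), q] [q\<^sup>2 / a, 0] q q =
    q ^ (n\<^sup>2 + 2 * n) * (qpochs [q, \<alpha> * a] q n / qpochs [q * \<alpha>, q\<^sup>2 / a] q n)
      * (\<alpha> / a) ^ n
      * (\<Sum>j = 0..n. (1 - \<alpha> * q ^ (2 * j)) * qpochs [\<alpha>, q / a] q j * (a / \<alpha>) ^ j
           * inverse (q ^ (j\<^sup>2 + j)) / ((1 - \<alpha>) * qpochs [q, \<alpha> * a] q j))"
proof -
  have q: "q \<noteq> 0" "norm q < 1"
    using assms(1,2) by auto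
  have "phi_sum q \<alpha> a n = rhs_sum q \<alpha> a n"
  proof (rule first_order_recurrence_unique)
    show "phi_sum q \<alpha> a 0 = rhs_sum q \<alpha> a 0"
      using assms(5)
      by (simp add: phi_sum_def phi_term_def rhs_sum_def rhs_factor_def rhs_term_def qpochs_def)
  next
    fix m
    assume "m < n"
    then have "qpoch (\<alpha> * a) q (Suc m) \<noteq> 0" "qpoch (q * \<alpha>) q (Suc m) \<noteq> 0"
      "qpoch (q\<^sup>2 / a) q (Suc m) \<noteq> 0"
      using assms(6-8) by (simp_all add: qpoch_nonzero_le)
    then show "rec_lead q \<alpha> a m \<noteq> 0"
      and "rec_lead q \<alpha> a m * phi_sum q \<alpha> a (Suc m) = rec_trail q \<alpha> a m * phi_sum q \<alpha> a m + rec_inhom q \<alpha> a m"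
      and "rec_lead q \<alpha> a m * rhs_sum q \<alpha> a (Suc m) = rec_trail q \<alpha> a m * rhs_sum q \<alpha> a m + rec_inhom q \<alpha> a m"
      using q assms(3-5) by (simp_all add: rec_lead_nonzero phi_sum_recurrence rhs_sum_recurrence)
  qed
  then show ?thesis
    unfolding bhs_3phi2_terminating[OF q] phi_sum_def phi_term_def rhs_sum_def rhs_factor_def rhs_term_def .
qed

end
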